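(* Let $D_n$ be the dumbbell graph on $2n$ nodes: the disjoint union of two complete graphs on $n$ nodes each (on $\{1,\dots,n\}$ and $\{n+1,\dots,2n\}$), together with the single additional edge $\{n,2n\}$. For every fixed $\epsilon\in(0,1)$, $t_{\epsilon,1}(D_n)=\Theta_\epsilon(n^3)$, i.e. there are constants $0<c_\epsilon\le C_\epsilon$ depending only on $\epsilon$ with $c_\epsilon n^3\le t_{\epsilon,1}(D_n)\le C_\epsilon n^3$.
   Context: The averaging process on a finite, undirected, connected graph $G=(V,E)$: the state vector $v(t)\in\mathbb R^{V}$, $t=0,1,2,\dots$, starts from a given $v(0)$; at each step $t\ge 1$ an edge $\{i,j\}\in E$ is chosen uniformly at random (independently of all previous choices) and both $v_i$ and $v_j$ are replaced by $(v_i+v_j)/2$, all other coordinates unchanged. $\bar v$ is the constant vector whose entries equal the mean of the entries of $v(0)$. $t_{\epsilon,1}(G)$ is the least $t\in\mathbb N$ such that for every $v(0)$ with $\|v(0)\|_1=1$ one has $\mathbb E\|v(t)-\bar v\|_1\le\epsilon$. *)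

theory Defs
  imports Main "HOL-Analysis.Analysis"
begin

text \<open>Graphs: vertex set V :: nat set, edge set E :: nat set set (each edge a 2-element set).
States are functions nat \<Rightarrow> real; only their values on V matter.\<close>

definition avg_step :: "nat set \<Rightarrow> (nat \<Rightarrow> real) \<Rightarrow> (nat \<Rightarrow> real)" where
  "avg_step e v = (\<lambda>k. if k \<in> e then (\<Sum>j\<in>e. v j) / 2 else v k)"

definition run_avg :: "nat set list \<Rightarrow> (nat \<Rightarrow> real) \<Rightarrow> (nat \<Rightarrow> real)" where
  "run_avg es v = fold avg_step es v"

definition l1norm :: "nat set \<Rightarrow> (nat \<Rightarrow> real) \<Rightarrow> real" where
  "l1norm V v = (\<Sum>k\<in>V. \<bar>v k\<bar>)"

definition mean_vec :: "nat set \<Rightarrow> (nat \<Rightarrow> real) \<Rightarrow> (nat \<Rightarrow> real)" where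
  "mean_vec V v = (\<lambda>k. (\<Sum>j\<in>V. v j) / real (card V))"

text \<open>E || v(t) - vbar ||_1, with the t edges chosen independently and uniformly from E:
an average over all |E|^t equally likely edge sequences.\<close>
definition expected_l1_dist :: "nat set \<Rightarrow> nat set set \<Rightarrow> nat \<Rightarrow> (nat \<Rightarrow> real) \<Rightarrow> real" where
  "expected_l1_dist V E t v0 =
     (\<Sum>es\<in>{es. set es \<subseteq> E \<and> length es = t}.
        l1norm V (\<lambda>k. run_avg es v0 k - mean_vec V v0 k)) / real (card E) ^ t"

definition t_eps_1 :: "real \<Rightarrow> nat set \<Rightarrow> nat set set \<Rightarrow> nat" where
  "t_eps_1 \<epsilon> V E = (LEAST t. \<forall>v0. l1norm V v0 = 1 \<longrightarrow> expected_l1_dist V E t v0 \<le> \<epsilon>)"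

definition dumbbell_V :: "nat \<Rightarrow> nat set" where
  "dumbbell_V n = {1..2*n}"

definition dumbbell_E :: "nat \<Rightarrow> nat set set" where
  "dumbbell_E n =
     {{i, j} | i j. i \<in> {1..n} \<and> j \<in> {1..n} \<and> i \<noteq> j}
   \<union> {{i, j} | i j. i \<in> {n+1..2*n} \<and> j \<in> {n+1..2*n} \<and> i \<noteq> j}
   \<union> {{n, 2*n}}"

end

theory Submission
  imports Defs
begin

text \<open>
  Let \<open>F\<close> be the sum of the variances of \<open>v\<close> inside the two cliques and \<open>D\<close> the
  difference of the two clique means. A random clique edge removes on average a fraction \<open>\<approx> 1/(2n)\<close>
  of \<open>F\<close>, while the bridge edge changes \<open>D\<close> only by \<open>O(1/n)\<close> of the deviations at its ends.
  Hence the potential \<open>b F + n\<^sup>2 D\<^sup>2\<close> contracts in expectation by \<open>1 - 1/(6 n |E|) \<approx> 1 - 1/(6 n\<^sup>3)\<close>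
  per step, and \<open>F\<close> itself contracts by \<open>1 - n/(2|E|)\<close> up to a source term of order \<open>D\<^sup>2/|E|\<close>. By AM-GM the
  \<open>\<ell>\<^sub>1\<close> distance to the mean is at most \<open>(n F + n\<^sup>2 D\<^sup>2)/(2 d) + 3 d/2\<close>, which is \<open>\<le> \<epsilon>\<close> after
  \<open>O(n\<^sup>3/\<epsilon>\<^sup>2)\<close> steps.

  The vector that is \<open>+1\<close> on one clique and \<open>-1\<close> on the other, corrected by a small
  \<open>\<lambda> \<approx> 2/n\<close> at the two ends of the bridge, is an eigenvector of the expected averaging step with
  eigenvalue \<open>1 - \<lambda>/(2|E|) \<ge> 1 - 1/n\<^sup>3\<close>. Started from this vector (normalised in \<open>\<ell>\<^sub>1\<close>), the
  expected correlation with it, a lower bound for the \<open>\<ell>\<^sub>1\<close> distance, stays above \<open>\<epsilon>\<close> for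
  \<open>c n\<^sup>3\<close> steps.
\<close>

lemma avg_step_doubleton:
  assumes "i \<noteq> j"
  shows "avg_step {i,j} w = (\<lambda>k. if k = i \<or> k = j then (w i + w j) / 2 else w k)"
  using assms by (auto simp: avg_step_def fun_eq_iff)

lemma avg_step_notin: "k \<notin> e \<Longrightarrow> avg_step e w k = w k"
  by (simp add: avg_step_def)

lemma sum_avg_step_both_ends:
  fixes G :: "nat \<Rightarrow> real \<Rightarrow> real"
  assumes "finite A" "i \<in> A" "j \<in> A" "i \<noteq> j"
  shows "(\<Sum>k\<in>A. G k (avg_step {i,j} w k)) = (\<Sum>k\<in>A. G k (w k)) - G i (w i) - G j (w j)
           + G i ((w i + w j) / 2) + G j ((w i + w j) / 2)"
proof -
  have A: "A = insert i (insert j (A - {i,j}))" using assms by auto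
  have rest: "(\<Sum>k\<in>A-{i,j}. G k (avg_step {i,j} w k)) = (\<Sum>k\<in>A-{i,j}. G k (w k))"
    by (rule sum.cong) (auto simp: avg_step_notin)
  show ?thesis
    using assms rest by (subst (1 2) A) (simp add: avg_step_doubleton)
qed

lemma sum_avg_step_one_end:
  fixes G :: "nat \<Rightarrow> real \<Rightarrow> real"
  assumes "finite A" "i \<in> A" "j \<notin> A"
  shows "(\<Sum>k\<in>A. G k (avg_step {i,j} w k)) = (\<Sum>k\<in>A. G k (w k)) - G i (w i) + G i ((w i + w j) / 2)"
proof -
  have rest: "(\<Sum>k\<in>A-{i}. G k (avg_step {i,j} w k)) = (\<Sum>k\<in>A-{i}. G k (w k))"
    using assms by (intro sum.cong) (auto simp: avg_step_def)
  have "i \<noteq> j" using assms by auto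
  then show ?thesis
    using assms rest by (simp add: sum.remove avg_step_doubleton)
qed

lemma sum_avg_step:
  assumes "finite A" "i \<in> A" "j \<in> A" "i \<noteq> j"
  shows "(\<Sum>k\<in>A. avg_step {i,j} w k) = (\<Sum>k\<in>A. w k)"
  using sum_avg_step_both_ends[OF assms, of "\<lambda>_ x. x" w] by simp

lemma sum_run_avg:
  assumes "finite V" and edges: "\<And>e. e \<in> E \<Longrightarrow> \<exists>i j. e = {i,j} \<and> i \<noteq> j \<and> i \<in> V \<and> j \<in> V"
    and "set es \<subseteq> E"
  shows "(\<Sum>k\<in>V. run_avg es v k) = (\<Sum>k\<in>V. v k)"
  using \<open>set es \<subseteq> E\<close>
proof (induction es arbitrary: v)
  case Nil
  then show ?case by (simp add: run_avg_def)
next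
  case (Cons e es)
  then obtain i j where "e = {i,j}" "i \<noteq> j" "i \<in> V" "j \<in> V" using edges by force
  then have "(\<Sum>k\<in>V. avg_step e v k) = (\<Sum>k\<in>V. v k)"
    using sum_avg_step \<open>finite V\<close> by blast
  then show ?case using Cons by (simp add: run_avg_def)
qed

lemma sum_linear_avg_step:
  fixes u :: "nat \<Rightarrow> real"
  assumes "finite V" "i \<in> V" "j \<in> V" "i \<noteq> j"
  shows "(\<Sum>k\<in>V. u k * avg_step {i,j} w k) - (\<Sum>k\<in>V. u k * w k) = - (u i - u j) * (w i - w j) / 2"
  using sum_avg_step_both_ends[OF assms, of "\<lambda>k x. u k * x" w]
  by (simp add: algebra_simps add_divide_distrib diff_divide_distrib)

section \<open>Expectation over random edge sequences\<close>

definition edge_seqs :: "nat set set \<Rightarrow> nat \<Rightarrow> nat set list set" where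
  "edge_seqs E t = {es. set es \<subseteq> E \<and> length es = t}"

definition expected_after :: "nat set set \<Rightarrow> nat \<Rightarrow> (nat \<Rightarrow> real) \<Rightarrow> ((nat \<Rightarrow> real) \<Rightarrow> real) \<Rightarrow> real" where
  "expected_after E t v0 h = (\<Sum>es\<in>edge_seqs E t. h (run_avg es v0)) / real (card E) ^ t"

lemma expected_l1_dist_eq_expected_after:
  "expected_l1_dist V E t v0 = expected_after E t v0 (\<lambda>w. l1norm V (\<lambda>k. w k - mean_vec V v0 k))"
  unfolding expected_l1_dist_def expected_after_def edge_seqs_def ..

lemma expected_after_0 [simp]: "expected_after E 0 v0 h = h v0"
proof -
  have "edge_seqs E 0 = {[]}" unfolding edge_seqs_def by auto
  then show ?thesis unfolding expected_after_def by (simp add: run_avg_def)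
qed

lemma edge_seqs_Suc: "edge_seqs E (Suc t) = (\<lambda>(es, e). es @ [e]) ` (edge_seqs E t \<times> E)"
proof
  show "edge_seqs E (Suc t) \<subseteq> (\<lambda>(es, e). es @ [e]) ` (edge_seqs E t \<times> E)"
  proof
    fix xs assume "xs \<in> edge_seqs E (Suc t)"
    then have "xs \<noteq> []" "set xs \<subseteq> E" "length xs = Suc t" by (auto simp: edge_seqs_def)
    then have "(butlast xs, last xs) \<in> edge_seqs E t \<times> E" "xs = butlast xs @ [last xs]"
      by (auto simp: edge_seqs_def dest: in_set_butlastD)
    then show "xs \<in> (\<lambda>(es, e). es @ [e]) ` (edge_seqs E t \<times> E)" by force
  qed
qed (auto simp: edge_seqs_def)

lemma sum_edge_seqs_Suc:
  assumes "finite E"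
  shows "(\<Sum>xs\<in>edge_seqs E (Suc t). G xs) = (\<Sum>es\<in>edge_seqs E t. \<Sum>e\<in>E. G (es @ [e]))"
proof -
  have "inj_on (\<lambda>(es, e). es @ [e]) (edge_seqs E t \<times> E)" by (auto simp: inj_on_def)
  then have "(\<Sum>xs\<in>edge_seqs E (Suc t). G xs) = (\<Sum>p\<in>edge_seqs E t \<times> E. G (fst p @ [snd p]))"
    unfolding edge_seqs_Suc by (subst sum.reindex) (simp_all add: case_prod_beta)
  then show ?thesis by (simp add: sum.cartesian_product case_prod_beta)
qed

lemma expected_after_Suc:
  assumes "finite E" "card E > 0"
  shows "expected_after E (Suc t) v0 h
           = expected_after E t v0 (\<lambda>w. \<Sum>e\<in>E. h (avg_step e w)) / real (card E)"
  using assms sum_edge_seqs_Suc[of E "\<lambda>xs. h (run_avg xs v0)" t]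
  by (simp add: expected_after_def run_avg_def field_simps)

lemma expected_after_mono:
  assumes "\<And>es. es \<in> edge_seqs E t \<Longrightarrow> h (run_avg es v0) \<le> g (run_avg es v0)"
  shows "expected_after E t v0 h \<le> expected_after E t v0 g"
  unfolding expected_after_def by (intro divide_right_mono sum_mono assms) auto

lemma expected_after_linear:
  "expected_after E t v0 (\<lambda>w. a * h w + b * g w) = a * expected_after E t v0 h + b * expected_after E t v0 g"
  unfolding expected_after_def
  by (simp add: sum.distrib sum_distrib_left[symmetric] add_divide_distrib)

lemma expected_after_const:
  assumes "finite E" "card E > 0"
  shows "expected_after E t v0 (\<lambda>_. c) = c"
  using assms by (auto simp: expected_after_def edge_seqs_def card_lists_length_eq)

lemma expected_after_geometric:
  assumes "finite E" "card E > 0" "0 \<le> c"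
    and step: "\<And>w. (\<Sum>e\<in>E. h (avg_step e w)) \<le> c * h w"
  shows "expected_after E t v0 h \<le> (c / real (card E)) ^ t * h v0"
proof (induction t)
  case (Suc t)
  have "expected_after E (Suc t) v0 h \<le> expected_after E t v0 (\<lambda>w. c * h w) / real (card E)"
    unfolding expected_after_Suc[OF assms(1,2)]
    by (intro divide_right_mono expected_after_mono step) auto
  also have "\<dots> = c / real (card E) * expected_after E t v0 h"
    using expected_after_linear[of E t v0 c h 0 h] by simp
  also have "\<dots> \<le> c / real (card E) * ((c / real (card E)) ^ t * h v0)"
    using Suc assms(3) by (intro mult_left_mono) auto
  finally show ?case by simp
qed simp

lemma expected_after_eigen:
  assumes "finite E" "card E > 0"
    and step: "\<And>w. (\<Sum>e\<in>E. h (avg_step e w)) = c * h w"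
  shows "expected_after E t v0 h = (c / real (card E)) ^ t * h v0"
proof (induction t)
  case (Suc t)
  have "expected_after E (Suc t) v0 h = expected_after E t v0 (\<lambda>w. c * h w) / real (card E)"
    unfolding expected_after_Suc[OF assms(1,2)] step ..
  also have "\<dots> = c / real (card E) * expected_after E t v0 h"
    using expected_after_linear[of E t v0 c h 0 h] by simp
  finally show ?case using Suc by simp
qed simp

definition mixes :: "real \<Rightarrow> nat set \<Rightarrow> nat set set \<Rightarrow> nat \<Rightarrow> bool" where
  "mixes \<epsilon> V E t \<longleftrightarrow> (\<forall>v0. l1norm V v0 = 1 \<longrightarrow> expected_l1_dist V E t v0 \<le> \<epsilon>)"

lemma t_eps_1_le: "mixes \<epsilon> V E t \<Longrightarrow> t_eps_1 \<epsilon> V E \<le> t"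
  unfolding t_eps_1_def mixes_def by (rule Least_le)

lemma mixes_t_eps_1: "mixes \<epsilon> V E t \<Longrightarrow> mixes \<epsilon> V E (t_eps_1 \<epsilon> V E)"
  unfolding t_eps_1_def mixes_def by (rule LeastI)

lemma not_mixes_at_0:
  assumes "finite V" "i \<in> V" "j \<in> V" "i \<noteq> j" "\<epsilon> < 1"
  shows "\<not> mixes \<epsilon> V E 0"
proof -
  define v0 :: "nat \<Rightarrow> real" where "v0 = (\<lambda>k. if k = i then 1/2 else if k = j then -1/2 else 0)"
  have "{i, j} \<subseteq> V" using assms by auto
  then have "(\<Sum>k\<in>V. f (v0 k)) = (\<Sum>k\<in>{i, j}. f (v0 k))" if "f 0 = 0" for f :: "real \<Rightarrow> real"
    using assms(1) that by (intro sum.mono_neutral_right) (auto simp: v0_def)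
  from this[of abs] this[of id] assms(4) have "l1norm V v0 = 1" "\<And>k. mean_vec V v0 k = 0"
    by (simp_all add: l1norm_def mean_vec_def v0_def)
  then show ?thesis using assms(5) unfolding mixes_def expected_l1_dist_eq_expected_after by auto
qed

section \<open>Cliques\<close>

definition clique_edges :: "nat set \<Rightarrow> nat set set" where
  "clique_edges A = {{i, j} | i j. i \<in> A \<and> j \<in> A \<and> i \<noteq> j}"

lemma finite_clique_edges: "finite A \<Longrightarrow> finite (clique_edges A)"
proof -
  assume "finite A"
  have "clique_edges A \<subseteq> (\<lambda>(i, j). {i, j}) ` (A \<times> A)" unfolding clique_edges_def by auto
  then show ?thesis using \<open>finite A\<close> finite_subset by blast
qed

lemma clique_edges_eq_image:
  "clique_edges A = (\<lambda>(i, j). {i, j}) ` {p \<in> A \<times> A. fst p < snd p}"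
proof
  show "(\<lambda>(i, j). {i, j}) ` {p \<in> A \<times> A. fst p < snd p} \<subseteq> clique_edges A"
    unfolding clique_edges_def by fastforce
  show "clique_edges A \<subseteq> (\<lambda>(i, j). {i, j}) ` {p \<in> A \<times> A. fst p < snd p}"
  proof
    fix e assume "e \<in> clique_edges A"
    then obtain i j where e: "e = {i, j}" "i \<in> A" "j \<in> A" "i \<noteq> j"
      unfolding clique_edges_def by blast
    show "e \<in> (\<lambda>(i, j). {i, j}) ` {p \<in> A \<times> A. fst p < snd p}"
    proof (cases "i < j")
      case True
      then show ?thesis using e by (auto intro!: image_eqI[of _ _ "(i, j)"])
    next
      case False
      then have "j < i" using e by simp
      then show ?thesis using e by (auto intro!: image_eqI[of _ _ "(j, i)"])
    qed
  qed
qed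

lemma sum_clique_edges:
  fixes g :: "nat \<Rightarrow> nat \<Rightarrow> real" and h :: "nat set \<Rightarrow> real"
  assumes fin: "finite A" and hg: "\<And>i j. i \<in> A \<Longrightarrow> j \<in> A \<Longrightarrow> i \<noteq> j \<Longrightarrow> h {i, j} = g i j"
    and sym: "\<And>i j. g i j = g j i" and diag: "\<And>i. g i i = 0"
  shows "(\<Sum>e\<in>clique_edges A. h e) = (\<Sum>i\<in>A. \<Sum>j\<in>A. g i j) / 2"
proof -
  define P where "P = {p \<in> A \<times> A. fst p < snd p}"
  define below where "below = (\<Sum>i\<in>A. \<Sum>j\<in>A. if i < j then g i j else 0)"
  have inj: "inj_on (\<lambda>(i, j). {i, j}) P"
    unfolding P_def inj_on_def by (auto simp: doubleton_eq_iff)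
  have "(\<Sum>e\<in>clique_edges A. h e) = (\<Sum>p\<in>P. h ((\<lambda>(i, j). {i, j}) p))"
    unfolding clique_edges_eq_image P_def[symmetric] using sum.reindex[OF inj, of h] by (simp add: comp_def)
  also have "\<dots> = (\<Sum>p\<in>P. g (fst p) (snd p))"
    by (rule sum.cong) (auto simp: P_def hg)
  also have "\<dots> = below"
    unfolding below_def P_def using fin
    by (simp add: sum.cartesian_product case_prod_beta sum.inter_filter)
  finally have edges: "(\<Sum>e\<in>clique_edges A. h e) = below" .
  have "(\<Sum>i\<in>A. \<Sum>j\<in>A. if j < i then g i j else 0) = (\<Sum>j\<in>A. \<Sum>i\<in>A. if j < i then g j i else 0)"
    by (subst sum.swap) (intro sum.cong refl, metis sym)
  then have above: "(\<Sum>i\<in>A. \<Sum>j\<in>A. if j < i then g i j else 0) = below"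
    unfolding below_def by simp
  have "\<And>i j. g i j = (if i < j then g i j else 0) + (if j < i then g i j else 0)"
    using diag by (metis add.right_neutral add_0 linorder_neqE_nat less_asym)
  then have "(\<Sum>i\<in>A. \<Sum>j\<in>A. g i j)
      = below + (\<Sum>i\<in>A. \<Sum>j\<in>A. if j < i then g i j else 0)"
    unfolding below_def sum.distrib[symmetric] by (intro sum.cong refl) metis
  then show ?thesis using edges above by simp
qed

lemma card_clique_edges:
  assumes "finite A"
  shows "real (card (clique_edges A)) = (real (card A) * real (card A) - real (card A)) / 2"
proof -
  have "real (card (clique_edges A)) = (\<Sum>i\<in>A. \<Sum>j\<in>A. if i = j then 0 else 1) / 2"
    using sum_clique_edges[OF assms, of "\<lambda>_. 1" "\<lambda>i j. if i = j then 0 else 1"] by simp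
  also have "(\<Sum>i\<in>A. \<Sum>j\<in>A. if i = j then 0 else (1::real)) = (\<Sum>i\<in>A. real (card A) - 1)"
  proof (rule sum.cong)
    fix i assume "i \<in> A"
    have "(\<Sum>j\<in>A. if i = j then 0 else (1::real)) = (\<Sum>j\<in>A. 1 - (if i = j then 1 else 0))"
      by (rule sum.cong) auto
    then show "(\<Sum>j\<in>A. if i = j then 0 else (1::real)) = real (card A) - 1"
      using \<open>i \<in> A\<close> assms by (simp add: sum_subtractf)
  qed simp
  finally show ?thesis by (simp add: algebra_simps)
qed

lemma sum_sum_diff_mult_diff:
  fixes u w :: "nat \<Rightarrow> real"
  assumes "finite A"
  shows "(\<Sum>i\<in>A. \<Sum>j\<in>A. (u i - u j) * (w i - w j))
       = 2 * real (card A) * (\<Sum>i\<in>A. u i * w i) - 2 * (\<Sum>i\<in>A. u i) * (\<Sum>i\<in>A. w i)"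
proof -
  have expand: "\<And>i j. (u i - u j) * (w i - w j) = u i * w i + u j * w j - u i * w j - u j * w i"
    by (simp add: algebra_simps)
  have diag: "(\<Sum>i\<in>A. \<Sum>j\<in>A. u i * w i) = real (card A) * (\<Sum>i\<in>A. u i * w i)"
    by (simp add: sum_distrib_left mult.commute)
  have cross: "(\<Sum>i\<in>A. \<Sum>j\<in>A. u i * w j) = (\<Sum>i\<in>A. u i) * (\<Sum>i\<in>A. w i)"
    by (simp add: sum_product)
  have cross': "(\<Sum>i\<in>A. \<Sum>j\<in>A. u j * w i) = (\<Sum>i\<in>A. u i) * (\<Sum>i\<in>A. w i)"
    using cross by (subst sum.swap) simp
  have "(\<Sum>i\<in>A. \<Sum>j\<in>A. (u i - u j) * (w i - w j))
      = (\<Sum>i\<in>A. \<Sum>j\<in>A. u i * w i) + (\<Sum>i\<in>A. \<Sum>j\<in>A. u j * w j)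
        - (\<Sum>i\<in>A. \<Sum>j\<in>A. u i * w j) - (\<Sum>i\<in>A. \<Sum>j\<in>A. u j * w i)"
    unfolding expand by (simp add: sum.distrib sum_subtractf)
  then show ?thesis using diag cross cross' by simp
qed

lemma sum_clique_linear_change:
  fixes u :: "nat \<Rightarrow> real"
  assumes "finite V" "A \<subseteq> V"
  shows "(\<Sum>e\<in>clique_edges A. (\<Sum>k\<in>V. u k * avg_step e w k) - (\<Sum>k\<in>V. u k * w k))
       = - (real (card A) * (\<Sum>k\<in>A. u k * w k) - (\<Sum>k\<in>A. u k) * (\<Sum>k\<in>A. w k)) / 2"
proof -
  have "finite A" using assms finite_subset by blast
  have "(\<Sum>e\<in>clique_edges A. (\<Sum>k\<in>V. u k * avg_step e w k) - (\<Sum>k\<in>V. u k * w k))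
      = (\<Sum>i\<in>A. \<Sum>j\<in>A. - ((u i - u j) * (w i - w j)) / 2) / 2"
    using assms \<open>finite A\<close>
    by (intro sum_clique_edges) (auto simp: sum_linear_avg_step subsetD, simp_all add: algebra_simps)
  also have "\<dots> = - (\<Sum>i\<in>A. \<Sum>j\<in>A. (u i - u j) * (w i - w j)) / 4"
    by (simp add: sum_negf sum_divide_distrib[symmetric])
  finally show ?thesis
    using sum_sum_diff_mult_diff[OF \<open>finite A\<close>, of u w] by simp
qed

definition block_mean :: "nat set \<Rightarrow> (nat \<Rightarrow> real) \<Rightarrow> real" where
  "block_mean A w = (\<Sum>k\<in>A. w k) / real (card A)"

definition variance_sum :: "nat set \<Rightarrow> (nat \<Rightarrow> real) \<Rightarrow> real" where
  "variance_sum A w = (\<Sum>k\<in>A. (w k - block_mean A w)\<^sup>2)"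

lemma variance_sum_nonneg: "0 \<le> variance_sum A w"
  unfolding variance_sum_def by (simp add: sum_nonneg)

lemma variance_sum_ge_term:
  "finite A \<Longrightarrow> p \<in> A \<Longrightarrow> (w p - block_mean A w)\<^sup>2 \<le> variance_sum A w"
  unfolding variance_sum_def by (rule member_le_sum) auto

lemma variance_sum_eq:
  assumes "finite A"
  shows "variance_sum A w = (\<Sum>k\<in>A. (w k)\<^sup>2) - (\<Sum>k\<in>A. w k)\<^sup>2 / real (card A)"
proof (cases "A = {}")
  case False
  define m where "m = block_mean A w"
  have "variance_sum A w = (\<Sum>k\<in>A. (w k)\<^sup>2 - 2 * m * w k + m\<^sup>2)"
    unfolding variance_sum_def m_def[symmetric] by (rule sum.cong) (simp_all add: power2_eq_square algebra_simps)
  also have "\<dots> = (\<Sum>k\<in>A. (w k)\<^sup>2) - 2 * m * (\<Sum>k\<in>A. w k) + real (card A) * m\<^sup>2"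
    by (simp add: sum.distrib sum_subtractf sum_distrib_left)
  finally show ?thesis
    using assms False unfolding m_def block_mean_def by (simp add: field_simps power2_eq_square)
qed (simp add: variance_sum_def)

lemma block_mean_avg_step_inside:
  "finite A \<Longrightarrow> e \<in> clique_edges A \<Longrightarrow> block_mean A (avg_step e w) = block_mean A w"
  unfolding clique_edges_def block_mean_def by (auto simp: sum_avg_step)

lemma avg_step_disjoint_block:
  assumes "A \<inter> e = {}"
  shows "block_mean A (avg_step e w) = block_mean A w"
    and "variance_sum A (avg_step e w) = variance_sum A w"
proof -
  have "\<And>k. k \<in> A \<Longrightarrow> avg_step e w k = w k" using assms by (metis avg_step_notin disjoint_iff)
  then show "block_mean A (avg_step e w) = block_mean A w"
    and "variance_sum A (avg_step e w) = variance_sum A w"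
    unfolding variance_sum_def block_mean_def by simp_all
qed

lemma variance_sum_avg_step_inside:
  assumes "finite A" "i \<in> A" "j \<in> A" "i \<noteq> j"
  shows "variance_sum A (avg_step {i,j} w) = variance_sum A w - (w i - w j)\<^sup>2 / 2"
proof -
  define m where "m = block_mean A w"
  have "{i,j} \<in> clique_edges A" using assms unfolding clique_edges_def by blast
  then have mean: "block_mean A (avg_step {i,j} w) = m"
    by (simp add: block_mean_avg_step_inside assms(1) m_def)
  have "2 * ((w i + w j) / 2 - m)\<^sup>2 - (w i - m)\<^sup>2 - (w j - m)\<^sup>2 = - (w i - w j)\<^sup>2 / 2"
    by (simp add: power2_eq_square field_simps)
  then show ?thesis
    unfolding variance_sum_def mean m_def[symmetric]
    using sum_avg_step_both_ends[OF assms, of "\<lambda>_ x. (x - m)\<^sup>2" w] by simp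
qed

lemma sum_clique_variance_change:
  assumes "finite A"
  shows "(\<Sum>e\<in>clique_edges A. variance_sum A (avg_step e w) - variance_sum A w)
       = - real (card A) / 2 * variance_sum A w"
proof -
  have "(\<Sum>e\<in>clique_edges A. variance_sum A (avg_step e w) - variance_sum A w)
      = (\<Sum>i\<in>A. \<Sum>j\<in>A. - (w i - w j)\<^sup>2 / 2) / 2"
    using assms by (intro sum_clique_edges) (auto simp: variance_sum_avg_step_inside power2_commute)
  also have "\<dots> = - (\<Sum>i\<in>A. \<Sum>j\<in>A. (w i - w j) * (w i - w j)) / 4"
    by (simp add: sum_negf sum_divide_distrib[symmetric] power2_eq_square)
  also have "\<dots> = - real (card A) / 2 * variance_sum A w"
  proof (cases "A = {}")
    case False
    then show ?thesis
      using assms unfolding sum_sum_diff_mult_diff[OF assms] variance_sum_eq[OF assms]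
      by (simp add: power2_eq_square field_simps)
  qed (simp add: variance_sum_def)
  finally show ?thesis .
qed

lemma power_le_inverse_linear:
  fixes q a :: real
  assumes "0 \<le> q" "q \<le> 1 - a" "0 \<le> a"
  shows "q ^ T \<le> 1 / (1 + a * real T)"
proof -
  have "q ^ T \<le> exp (- a) ^ T"
    using assms exp_ge_add_one_self[of "- a"] by (intro power_mono) auto
  also have "\<dots> = 1 / exp (a * real T)"
    by (simp add: exp_of_nat_mult[symmetric] exp_minus field_simps)
  also have "\<dots> \<le> 1 / (1 + a * real T)"
    using assms(3) exp_ge_add_one_self[of "a * real T"]
    by (intro divide_left_mono mult_pos_pos) (auto intro: add_pos_nonneg)
  finally show ?thesis .
qed

lemma abs_le_amgm:
  fixes z s :: real
  assumes "s > 0"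
  shows "\<bar>z\<bar> \<le> (z\<^sup>2 / s + s) / 2"
proof -
  have "0 \<le> (\<bar>z\<bar> - s)\<^sup>2" by simp
  then have "2 * s * \<bar>z\<bar> \<le> z\<^sup>2 + s\<^sup>2" by (simp add: power2_eq_square algebra_simps)
  then show ?thesis using assms by (simp add: field_simps power2_eq_square)
qed

lemma sum_abs_dev_le:
  assumes "finite A" "s > 0"
  shows "(\<Sum>k\<in>A. \<bar>w k - M\<bar>)
           \<le> variance_sum A w / (2 * s) + real (card A) * (s / 2 + \<bar>block_mean A w - M\<bar>)"
proof -
  have "(\<Sum>k\<in>A. \<bar>w k - M\<bar>) \<le> (\<Sum>k\<in>A. (w k - block_mean A w)\<^sup>2 / (2 * s) + (s / 2 + \<bar>block_mean A w - M\<bar>))"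
  proof (rule sum_mono)
    fix k
    have "\<bar>w k - M\<bar> \<le> \<bar>w k - block_mean A w\<bar> + \<bar>block_mean A w - M\<bar>"
      using abs_triangle_ineq[of "w k - block_mean A w" "block_mean A w - M"] by simp
    then show "\<bar>w k - M\<bar> \<le> (w k - block_mean A w)\<^sup>2 / (2 * s) + (s / 2 + \<bar>block_mean A w - M\<bar>)"
      using abs_le_amgm[OF assms(2), of "w k - block_mean A w"] by (simp add: field_simps)
  qed
  then show ?thesis by (simp add: variance_sum_def sum.distrib sum_divide_distrib)
qed

text \<open>Variance bookkeeping for the bridge edge: \<open>S\<close> and \<open>Q\<close> are the sums and the sums of squares
  over the two cliques of size \<open>n\<close>, and \<open>a\<close>, \<open>c\<close> the values at the two ends of the bridge.\<close>

lemma bridge_variance_identity: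
  fixes n SL QL SR QR a c :: real
  assumes "n > 0"
  shows "(QL - a\<^sup>2 + ((a + c) / 2)\<^sup>2) - (SL - a + (a + c) / 2)\<^sup>2 / n
           + ((QR - c\<^sup>2 + ((c + a) / 2)\<^sup>2) - (SR - c + (c + a) / 2)\<^sup>2 / n)
       = (QL - SL\<^sup>2 / n) + (QR - SR\<^sup>2 / n) + ((SL - SR) / n)\<^sup>2 / 2
         - ((a - SL / n) - (c - SR / n))\<^sup>2 / 2
         - ((SL - SR) / n + ((a - SL / n) - (c - SR / n)))\<^sup>2 / (2 * n)"
  using assms by (simp add: field_simps power2_eq_square; simp add: algebra_simps)

text \<open>The change of the potential \<open>b F + n\<^sup>2 D\<^sup>2\<close> summed over all edges (clique edges contribute
  \<open>-n F/2\<close>, the bridge the rest; \<open>y\<close> is as in \<open>bridge_step\<close>), for the two weights \<open>b\<close> used below.\<close>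

lemma potential_drift_weight_2n:
  fixes n F D y :: real
  assumes n: "n \<ge> 1" and F: "F \<ge> 0" and y: "y\<^sup>2 \<le> 2*F"
  shows "2*n * (D\<^sup>2/2 - y\<^sup>2/2 - (D+y)\<^sup>2/(2*n) - n/2*F) + n\<^sup>2 * ((D - (D+y)/n)\<^sup>2 - D\<^sup>2)
         \<le> - (2*n*F + n\<^sup>2*D\<^sup>2)/(6*n)"
proof -
  have e: "2*n * (D\<^sup>2/2 - y\<^sup>2/2 - (D+y)\<^sup>2/(2*n) - n/2*F) + n\<^sup>2 * ((D - (D+y)/n)\<^sup>2 - D\<^sup>2)
        = - n*(D+y)\<^sup>2 - n\<^sup>2*F"
    using n by (simp add: field_simps power2_eq_square; simp add: algebra_simps)
  have r: "- (2*n*F + n\<^sup>2*D\<^sup>2)/(6*n) = -F/3 - n*D\<^sup>2/6"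
    using n by (simp add: field_simps power2_eq_square)
  have x: "(D+y)\<^sup>2 \<ge> D\<^sup>2/2 - y\<^sup>2"
  proof -
    have "0 \<le> (D + 2*y)\<^sup>2" by simp
    thus ?thesis by (simp add: power2_eq_square algebra_simps)
  qed
  have "n*(D+y)\<^sup>2 \<ge> n*(D\<^sup>2/2 - y\<^sup>2)/3"
  proof -
    have "n*(D+y)\<^sup>2 \<ge> n*(D+y)\<^sup>2/3" using n by simp
    moreover have "n*(D+y)\<^sup>2 \<ge> n*(D\<^sup>2/2 - y\<^sup>2)" using x n by (simp add: mult_left_mono)
    moreover have "n*(D+y)\<^sup>2 \<ge> 0" using n by simp
    moreover have "\<And>P X::real. P \<le> X \<Longrightarrow> 0 \<le> X \<Longrightarrow> P/3 \<le> X" by linarith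
    ultimately show ?thesis by blast
  qed
  moreover have "n*y\<^sup>2 \<le> n*(2*F)" using y n by (simp add: mult_left_mono)
  moreover have "(n\<^sup>2 - 2*n/3 - 1/3) * F \<ge> 0"
  proof -
    have "n\<^sup>2 - 2*n/3 - 1/3 = (n - 1)*(n + 1/3)" by (simp add: power2_eq_square field_simps)
    also have "\<dots> \<ge> 0" using n by simp
    finally show ?thesis using F by simp
  qed
  ultimately show ?thesis unfolding e r by (simp add: algebra_simps)
qed

lemma potential_drift_weight_10:
  fixes n F D y :: real
  assumes n: "n \<ge> 6" and F: "F \<ge> 0" and y: "y\<^sup>2 \<le> 2*F"
  shows "10 * (D\<^sup>2/2 - y\<^sup>2/2 - (D+y)\<^sup>2/(2*n) - n/2*F) + n\<^sup>2 * ((D - (D+y)/n)\<^sup>2 - D\<^sup>2)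
         \<le> - (10*F + n\<^sup>2*D\<^sup>2)/(6*n)"
proof -
  have n0: "n > 0" using n by simp
  have nn: "n*n \<ge> 6*n" using n by (simp add: mult_right_mono)
  have e: "10 * (D\<^sup>2/2 - y\<^sup>2/2 - (D+y)\<^sup>2/(2*n) - n/2*F) + n\<^sup>2 * ((D - (D+y)/n)\<^sup>2 - D\<^sup>2)
        = 5*D\<^sup>2 - 5*y\<^sup>2 + (1 - 5/n)*(D+y)\<^sup>2 - 2*n*D\<^sup>2 - 2*n*D*y - 5*n*F"
    using n0 by (simp add: field_simps power2_eq_square; simp add: algebra_simps)
  have r: "- (10*F + n\<^sup>2*D\<^sup>2)/(6*n) = -5*F/(3*n) - n*D\<^sup>2/6"
    using n0 by (simp add: field_simps power2_eq_square)
  have h1: "-2*n*D*y \<le> (n/2)*D\<^sup>2 + 2*n*y\<^sup>2"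
  proof -
    have "0 \<le> (n/2)*(D + 2*y)\<^sup>2" using n0 by simp
    thus ?thesis by (simp add: power2_eq_square algebra_simps)
  qed
  have h2: "(1 - 5/n)*(D+y)\<^sup>2 \<le> (1 - 5/n)*(2*D\<^sup>2 + 2*y\<^sup>2)"
  proof (rule mult_left_mono)
    have "0 \<le> (D - y)\<^sup>2" by simp
    thus "(D+y)\<^sup>2 \<le> 2*D\<^sup>2 + 2*y\<^sup>2" by (simp add: power2_eq_square algebra_simps)
    show "0 \<le> 1 - 5/n" using n by (simp add: field_simps)
  qed
  have c1: "2*n - 3 - 10/n \<ge> 0" using n nn n0 by (simp add: field_simps; linarith)
  have h3: "(2*n - 3 - 10/n)*y\<^sup>2 \<le> (2*n - 3 - 10/n)*(2*F)" by (rule mult_left_mono[OF y c1])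
  have c2: "7 - 10/n - 3/2*n \<le> - n/6" using n nn n0 by (simp add: field_simps; linarith)
  have h4: "(7 - 10/n - 3/2*n)*D\<^sup>2 \<le> (- n/6)*D\<^sup>2" using mult_right_mono[OF c2, of "D\<^sup>2"] by simp
  have c3: "- n - 6 - 20/n \<le> -5/(3*n)"
  proof -
    have "5/(3*n) \<le> 20/n" using n0 by (simp add: divide_simps)
    thus ?thesis using n by linarith
  qed
  have h5: "(- n - 6 - 20/n)*F \<le> (-5/(3*n))*F" using mult_right_mono[OF c3 F] by simp
  have "5*D\<^sup>2 - 5*y\<^sup>2 + (1 - 5/n)*(D+y)\<^sup>2 - 2*n*D\<^sup>2 - 2*n*D*y - 5*n*F
     \<le> (7 - 10/n - 3/2*n)*D\<^sup>2 + (2*n - 3 - 10/n)*y\<^sup>2 - 5*n*F"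
    using h1 h2 by (simp add: algebra_simps)
  also have "\<dots> \<le> (- n/6)*D\<^sup>2 + (2*n - 3 - 10/n)*(2*F) - 5*n*F" using h3 h4 by linarith
  also have "\<dots> = (- n/6)*D\<^sup>2 + (- n - 6 - 20/n)*F" by (simp add: algebra_simps)
  also have "\<dots> \<le> (- n/6)*D\<^sup>2 + (-5/(3*n))*F" using h5 by linarith
  finally show ?thesis unfolding e r by (simp add: algebra_simps)
qed

section \<open>The dumbbell graph\<close>

locale dumbbell =
  fixes n :: nat
  assumes n_pos: "1 \<le> n"
begin

abbreviation "L \<equiv> {1..n}"
abbreviation "R \<equiv> {n+1..2*n}"
abbreviation "V \<equiv> {1..2*n}"
abbreviation "E \<equiv> dumbbell_E n"

lemma sum_V_split: "(\<Sum>k\<in>V. f k) = (\<Sum>k\<in>L. f k) + (\<Sum>k\<in>R. f k)"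
proof -
  have "V = L \<union> R" by auto
  then show ?thesis by (simp add: sum.union_disjoint)
qed

lemma dumbbell_E_eq: "E = clique_edges L \<union> clique_edges R \<union> {{n, 2*n}}"
  unfolding dumbbell_E_def clique_edges_def by simp

lemma finite_E: "finite E"
  unfolding dumbbell_E_eq by (simp add: finite_clique_edges)

lemma sum_E: "(\<Sum>e\<in>E. h e) = (\<Sum>e\<in>clique_edges L. h e) + (\<Sum>e\<in>clique_edges R. h e) + h {n, 2*n}"
proof -
  have "clique_edges L \<inter> clique_edges R = {}"
    unfolding clique_edges_def by (auto simp: doubleton_eq_iff)
  moreover have "{n, 2*n} \<notin> clique_edges L \<union> clique_edges R"
    using n_pos unfolding clique_edges_def by (auto simp: doubleton_eq_iff)
  ultimately show ?thesis
    unfolding dumbbell_E_eq by (simp add: sum.union_disjoint finite_clique_edges ac_simps)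
qed

lemma sum_E_avg_step:
  "(\<Sum>e\<in>E. f (avg_step e w)) = real (card E) * f w
     + (\<Sum>e\<in>clique_edges L. f (avg_step e w) - f w) + (\<Sum>e\<in>clique_edges R. f (avg_step e w) - f w)
     + (f (avg_step {n, 2*n} w) - f w)"
  using sum_E[of "\<lambda>e. f (avg_step e w) - f w"] by (simp add: sum_subtractf)

lemma card_E: "real (card E) = real n * real n - real n + 1"
  using sum_E[of "\<lambda>_. 1::real"] card_clique_edges[of L] card_clique_edges[of R] by simp

lemma card_E_pos: "card E > 0"
  using finite_E dumbbell_E_eq by (metis Un_insert_right card_gt_0_iff insert_not_empty)

lemma card_E_bounds: "real n \<le> real (card E)" "real (card E) \<le> real n ^ 2"
proof -
  have "0 \<le> (real n - 1)\<^sup>2" by simp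
  then show "real n \<le> real (card E)" unfolding card_E by (simp add: power2_eq_square algebra_simps)
  show "real (card E) \<le> real n ^ 2" using card_E n_pos by (simp add: power2_eq_square)
qed

lemma sum_run_avg_V: "set es \<subseteq> E \<Longrightarrow> (\<Sum>k\<in>V. run_avg es v k) = (\<Sum>k\<in>V. v k)"
proof (rule sum_run_avg[of V E])
  fix e assume "e \<in> E"
  then show "\<exists>i j. e = {i,j} \<and> i \<noteq> j \<and> i \<in> V \<and> j \<in> V"
    unfolding dumbbell_E_eq clique_edges_def using n_pos by fastforce
qed simp_all

definition within_var :: "(nat \<Rightarrow> real) \<Rightarrow> real" where
  "within_var w = variance_sum L w + variance_sum R w"

definition mean_gap :: "(nat \<Rightarrow> real) \<Rightarrow> real" where
  "mean_gap w = block_mean L w - block_mean R w"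

lemma within_var_nonneg: "0 \<le> within_var w"
  unfolding within_var_def by (simp add: add_nonneg_nonneg variance_sum_nonneg)

lemma clique_edges_disjoint:
  "e \<in> clique_edges L \<Longrightarrow> R \<inter> e = {}" "e \<in> clique_edges R \<Longrightarrow> L \<inter> e = {}"
  unfolding clique_edges_def by auto

lemma mean_gap_clique_step:
  assumes "e \<in> clique_edges L \<union> clique_edges R"
  shows "mean_gap (avg_step e w) = mean_gap w"
  using assms block_mean_avg_step_inside[of L e w] block_mean_avg_step_inside[of R e w]
    avg_step_disjoint_block(1)[OF clique_edges_disjoint(1), of e w]
    avg_step_disjoint_block(1)[OF clique_edges_disjoint(2), of e w]
  unfolding mean_gap_def by auto

lemma within_var_clique_change:
  "(\<Sum>e\<in>clique_edges L. within_var (avg_step e w) - within_var w) = - real n / 2 * variance_sum L w"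
  "(\<Sum>e\<in>clique_edges R. within_var (avg_step e w) - within_var w) = - real n / 2 * variance_sum R w"
proof -
  have "(\<Sum>e\<in>clique_edges L. within_var (avg_step e w) - within_var w)
      = (\<Sum>e\<in>clique_edges L. variance_sum L (avg_step e w) - variance_sum L w)"
    unfolding within_var_def
    by (intro sum.cong) (use avg_step_disjoint_block(2)[OF clique_edges_disjoint(1)] in auto)
  then show "(\<Sum>e\<in>clique_edges L. within_var (avg_step e w) - within_var w) = - real n / 2 * variance_sum L w"
    using sum_clique_variance_change[of L w] by simp
  have "(\<Sum>e\<in>clique_edges R. within_var (avg_step e w) - within_var w)
      = (\<Sum>e\<in>clique_edges R. variance_sum R (avg_step e w) - variance_sum R w)"
    unfolding within_var_def
    by (intro sum.cong) (use avg_step_disjoint_block(2)[OF clique_edges_disjoint(2)] in auto)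
  then show "(\<Sum>e\<in>clique_edges R. within_var (avg_step e w) - within_var w) = - real n / 2 * variance_sum R w"
    using sum_clique_variance_change[of R w] by simp
qed

lemma bridge_step:
  fixes w :: "nat \<Rightarrow> real"
  defines "y \<equiv> (w n - block_mean L w) - (w (2*n) - block_mean R w)"
  shows "within_var (avg_step {n, 2*n} w)
           = within_var w + (mean_gap w)\<^sup>2 / 2 - y\<^sup>2 / 2 - (mean_gap w + y)\<^sup>2 / (2 * n)"
    and "mean_gap (avg_step {n, 2*n} w) = mean_gap w - (mean_gap w + y) / n"
    and "y\<^sup>2 \<le> 2 * within_var w"
proof -
  have swap: "{n, 2*n} = {2*n, n}" by auto
  have np: "real n > 0" using n_pos by simp
  define a c where "a = w n" and "c = w (2*n)"
  have SL: "(\<Sum>k\<in>L. avg_step {n, 2*n} w k) = (\<Sum>k\<in>L. w k) - a + (a + c) / 2"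
    using sum_avg_step_one_end[of L n "2*n" "\<lambda>_ x. x" w] unfolding a_def c_def using n_pos by simp
  have QL: "(\<Sum>k\<in>L. (avg_step {n, 2*n} w k)\<^sup>2) = (\<Sum>k\<in>L. (w k)\<^sup>2) - a\<^sup>2 + ((a + c) / 2)\<^sup>2"
    using sum_avg_step_one_end[of L n "2*n" "\<lambda>_ x. x\<^sup>2" w] unfolding a_def c_def using n_pos by simp
  have SR: "(\<Sum>k\<in>R. avg_step {n, 2*n} w k) = (\<Sum>k\<in>R. w k) - c + (c + a) / 2"
    using sum_avg_step_one_end[of R "2*n" n "\<lambda>_ x. x" w] unfolding a_def c_def swap using n_pos by simp
  have QR: "(\<Sum>k\<in>R. (avg_step {n, 2*n} w k)\<^sup>2) = (\<Sum>k\<in>R. (w k)\<^sup>2) - c\<^sup>2 + ((c + a) / 2)\<^sup>2"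
    using sum_avg_step_one_end[of R "2*n" n "\<lambda>_ x. x\<^sup>2" w] unfolding a_def c_def swap using n_pos by simp
  show "within_var (avg_step {n, 2*n} w)
           = within_var w + (mean_gap w)\<^sup>2 / 2 - y\<^sup>2 / 2 - (mean_gap w + y)\<^sup>2 / (2 * n)"
    unfolding within_var_def mean_gap_def y_def block_mean_def variance_sum_eq[OF finite_atLeastAtMost]
      SL QL SR QR a_def[symmetric] c_def[symmetric]
    using bridge_variance_identity[OF np, where QL = "\<Sum>k\<in>L. (w k)\<^sup>2" and SL = "\<Sum>k\<in>L. w k"
        and QR = "\<Sum>k\<in>R. (w k)\<^sup>2" and SR = "\<Sum>k\<in>R. w k" and a = a and c = c]
    by (simp add: diff_divide_distrib)
  show "mean_gap (avg_step {n, 2*n} w) = mean_gap w - (mean_gap w + y) / n"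
    unfolding mean_gap_def y_def block_mean_def SL SR a_def c_def using np by (simp add: field_simps)
  define p q where "p = w n - block_mean L w" and "q = w (2*n) - block_mean R w"
  have "0 \<le> (p + q)\<^sup>2" by simp
  then have "y\<^sup>2 \<le> 2 * p\<^sup>2 + 2 * q\<^sup>2"
    unfolding y_def p_def[symmetric] q_def[symmetric] by (simp add: power2_eq_square algebra_simps)
  also have "\<dots> \<le> 2 * within_var w"
    unfolding within_var_def p_def q_def
    using n_pos variance_sum_ge_term[of L n w] variance_sum_ge_term[of R "2*n" w] by simp
  finally show "y\<^sup>2 \<le> 2 * within_var w" .
qed

subsection \<open>Upper bound\<close>

lemma within_var_step:
  "(\<Sum>e\<in>E. within_var (avg_step e w)) \<le> (real (card E) - real n / 2) * within_var w + (mean_gap w)\<^sup>2 / 2"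
proof -
  define y where "y = (w n - block_mean L w) - (w (2*n) - block_mean R w)"
  have "(\<Sum>e\<in>E. within_var (avg_step e w))
      = (real (card E) - real n / 2) * within_var w + (mean_gap w)\<^sup>2 / 2
        - y\<^sup>2 / 2 - (mean_gap w + y)\<^sup>2 / (2 * real n)"
    unfolding sum_E_avg_step within_var_clique_change bridge_step(1)[of w, folded y_def]
    by (simp add: within_var_def algebra_simps)
  moreover have "0 \<le> (mean_gap w + y)\<^sup>2 / (2 * real n)" "0 \<le> y\<^sup>2" by simp_all
  ultimately show ?thesis by linarith
qed

text \<open>The weight \<open>2 n\<close> makes the potential contract for every \<open>n\<close>, but then the initial
  potential grows with \<open>n\<close>; the weight \<open>10\<close> keeps it bounded by \<open>11\<close> but needs \<open>n \<ge> 6\<close>.\<close>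

definition potential_weight :: real where
  "potential_weight = (if n \<le> 5 then 2 * real n else 10)"

definition potential :: "(nat \<Rightarrow> real) \<Rightarrow> real" where
  "potential w = potential_weight * within_var w + (real n)\<^sup>2 * (mean_gap w)\<^sup>2"

lemma mean_gap_sq_le_potential: "(real n)\<^sup>2 * (mean_gap w)\<^sup>2 \<le> potential w"
  unfolding potential_def potential_weight_def using within_var_nonneg[of w] by simp

lemma potential_step:
  "(\<Sum>e\<in>E. potential (avg_step e w)) \<le> (real (card E) - 1 / (6 * real n)) * potential w"
proof -
  define b D F y where "b = potential_weight" and "D = mean_gap w" and "F = within_var w"
    and "y = (w n - block_mean L w) - (w (2*n) - block_mean R w)"
  note bridge = bridge_step[of w, folded D_def F_def y_def]
  have clique: "(\<Sum>e\<in>clique_edges A. potential (avg_step e w) - potential w)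
      = b * (\<Sum>e\<in>clique_edges A. within_var (avg_step e w) - within_var w)"
    if "A = L \<or> A = R" for A
    unfolding sum_distrib_left using that
    by (intro sum.cong) (use mean_gap_clique_step in \<open>auto simp: potential_def b_def algebra_simps\<close>)
  have "(\<Sum>e\<in>E. potential (avg_step e w)) - real (card E) * potential w
      = b * (D\<^sup>2/2 - y\<^sup>2/2 - (D+y)\<^sup>2/(2*n) - real n / 2 * F) + (real n)\<^sup>2 * ((D - (D+y)/n)\<^sup>2 - D\<^sup>2)"
    unfolding sum_E_avg_step clique[OF disjI1, OF refl] clique[OF disjI2, OF refl] within_var_clique_change
    unfolding potential_def bridge(1,2) b_def[symmetric] D_def[symmetric] F_def[symmetric]
    by (simp add: F_def within_var_def algebra_simps)
  also have "\<dots> \<le> - (b * F + (real n)\<^sup>2 * D\<^sup>2) / (6 * real n)"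
  proof (cases "n \<le> 5")
    case True
    then show ?thesis unfolding b_def potential_weight_def
      using potential_drift_weight_2n[of "real n" F y D] n_pos within_var_nonneg bridge(3) F_def by simp
  next
    case False
    then show ?thesis unfolding b_def potential_weight_def
      using potential_drift_weight_10[of "real n" F y D] within_var_nonneg bridge(3) F_def by simp
  qed
  also have "\<dots> = - potential w / (6 * real n)" unfolding potential_def b_def F_def D_def ..
  finally show ?thesis by (simp add: algebra_simps)
qed

definition slow_rate :: real where
  "slow_rate = 1 - 1 / (6 * real n * real (card E))"

definition fast_rate :: real where
  "fast_rate = 1 - real n / (2 * real (card E))"

lemma slow_rate_bounds: "0 \<le> slow_rate" "slow_rate \<le> 1 - 1 / (6 * real n ^ 3)"
proof -
  have E: "real n \<le> real (card E)" "real (card E) \<le> real n ^ 2" by (rule card_E_bounds)+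
  have "1 * 1 \<le> real n * real (card E)"
    using n_pos E(1) by (intro mult_mono) auto
  then have "1 \<le> 6 * real n * real (card E)" by simp
  then show "0 \<le> slow_rate" unfolding slow_rate_def by (simp add: field_simps)
  have "6 * real n * real (card E) \<le> 6 * real n ^ 3"
    using E(2) by (simp add: power3_eq_cube power2_eq_square mult_left_mono)
  then show "slow_rate \<le> 1 - 1 / (6 * real n ^ 3)"
    unfolding slow_rate_def using \<open>1 \<le> 6 * real n * real (card E)\<close>
    by (simp add: frac_le)
qed

lemma fast_rate_bounds: "0 \<le> fast_rate" "fast_rate \<le> 1 - 1 / (2 * real n)"
proof -
  have E: "real n \<le> real (card E)" "real (card E) \<le> real n ^ 2" by (rule card_E_bounds)+
  then show "0 \<le> fast_rate" unfolding fast_rate_def using n_pos by (simp add: field_simps)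
  have "real n / (2 * real n ^ 2) \<le> real n / (2 * real (card E))"
    using E n_pos card_E_pos by (intro divide_left_mono) auto
  then show "fast_rate \<le> 1 - 1 / (2 * real n)"
    unfolding fast_rate_def using n_pos by (simp add: power2_eq_square)
qed

lemma potential_decay: "expected_after E t v0 potential \<le> slow_rate ^ t * potential v0"
proof -
  have "1 / (6 * real n) \<le> 1" using n_pos by simp
  also have "1 \<le> real (card E)" using card_E_pos by simp
  finally have "expected_after E t v0 potential
      \<le> ((real (card E) - 1 / (6 * real n)) / real (card E)) ^ t * potential v0"
    by (intro expected_after_geometric finite_E card_E_pos potential_step) simp
  also have "(real (card E) - 1 / (6 * real n)) / real (card E) = slow_rate"
    unfolding slow_rate_def using card_E_pos by (simp add: field_simps)
  finally show ?thesis .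
qed

lemma mean_gap_sq_decay:
  assumes "potential v0 \<le> 11"
  shows "expected_after E t v0 (\<lambda>w. (real n)\<^sup>2 * (mean_gap w)\<^sup>2) \<le> 11 * slow_rate ^ t"
proof -
  have "expected_after E t v0 (\<lambda>w. (real n)\<^sup>2 * (mean_gap w)\<^sup>2) \<le> expected_after E t v0 potential"
    by (intro expected_after_mono mean_gap_sq_le_potential)
  also have "\<dots> \<le> slow_rate ^ t * potential v0" by (rule potential_decay)
  also have "\<dots> \<le> 11 * slow_rate ^ t"
    using mult_right_mono[OF assms zero_le_power[OF slow_rate_bounds(1)], of t] by (simp add: mult.commute)
  finally show ?thesis .
qed

text \<open>The source term \<open>D\<^sup>2/2\<close> of \<open>within_var_step\<close>, which decays at the slow rate,
  is absorbed by the term \<open>22/n\<^sup>3 \<cdot> slow_rate\<^sup>t\<close>.\<close>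

lemma rates_balance:
  "22 / real n ^ 3 * fast_rate + 11 / (2 * real (card E) * (real n)\<^sup>2) \<le> 22 / real n ^ 3 * slow_rate"
proof -
  define X where "X = 1 / ((real n)\<^sup>2 * real (card E))"
  have X0: "X > 0" unfolding X_def using card_E_pos n_pos by simp
  have "X / (real n)\<^sup>2 \<le> X / 1"
    using X0 n_pos by (intro divide_left_mono) (auto simp: one_le_power)
  then have X: "X > 0" "X / (real n)\<^sup>2 \<le> X" using X0 by simp_all
  have "22 / real n ^ 3 * slow_rate - 22 / real n ^ 3 * fast_rate = 11 * X - (11/3) * X / (real n)\<^sup>2"
    unfolding X_def slow_rate_def fast_rate_def using card_E_pos n_pos
    by (simp add: field_simps power2_eq_square power3_eq_cube)
  moreover have "11 / (2 * real (card E) * (real n)\<^sup>2) = (11/2) * X"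
    unfolding X_def by (simp add: field_simps)
  ultimately show ?thesis using X by linarith
qed

lemma within_var_decay:
  assumes "potential v0 \<le> 11"
  shows "expected_after E t v0 within_var \<le> fast_rate ^ t * within_var v0 + 22 / real n ^ 3 * slow_rate ^ t"
proof (induction t)
  case (Suc t)
  define A where "A = 22 / real n ^ 3"
  have "expected_after E (Suc t) v0 within_var
      \<le> expected_after E t v0 (\<lambda>w. (real (card E) - real n / 2) * within_var w
                                  + 1 / (2 * (real n)\<^sup>2) * ((real n)\<^sup>2 * (mean_gap w)\<^sup>2)) / real (card E)"
    unfolding expected_after_Suc[OF finite_E card_E_pos]
    using within_var_step n_pos by (intro divide_right_mono expected_after_mono) auto
  also have "\<dots> = fast_rate * expected_after E t v0 within_var
      + expected_after E t v0 (\<lambda>w. (real n)\<^sup>2 * (mean_gap w)\<^sup>2) / (2 * real (card E) * (real n)\<^sup>2)"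
    unfolding expected_after_linear fast_rate_def using card_E_pos n_pos by (simp add: field_simps)
  also have "\<dots> \<le> fast_rate * (fast_rate ^ t * within_var v0 + A * slow_rate ^ t)
      + 11 * slow_rate ^ t / (2 * real (card E) * (real n)\<^sup>2)"
    using Suc fast_rate_bounds(1) mean_gap_sq_decay[OF assms, of t]
    unfolding A_def by (intro add_mono mult_left_mono divide_right_mono) auto
  also have "\<dots> = fast_rate ^ Suc t * within_var v0
      + slow_rate ^ t * (A * fast_rate + 11 / (2 * real (card E) * (real n)\<^sup>2))"
    by (simp add: algebra_simps)
  also have "\<dots> \<le> fast_rate ^ Suc t * within_var v0 + slow_rate ^ t * (A * slow_rate)"
    using rates_balance slow_rate_bounds(1) unfolding A_def by (intro add_left_mono mult_left_mono) auto
  finally show ?case unfolding A_def by (simp add: algebra_simps)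
qed simp

lemma l1_dist_bound:
  assumes sum_eq: "(\<Sum>k\<in>V. w k) = (\<Sum>k\<in>V. v0 k)" and d: "d > 0"
  shows "l1norm V (\<lambda>k. w k - mean_vec V v0 k)
           \<le> (real n * within_var w + (real n)\<^sup>2 * (mean_gap w)\<^sup>2) / (2 * d) + 3 * d / 2"
proof -
  define s D M where "s = d / real n" and "D = mean_gap w"
    and "M = (block_mean L w + block_mean R w) / 2"
  have np: "real n > 0" using n_pos by simp
  have s: "s > 0" unfolding s_def using d np by simp
  have mean: "mean_vec V v0 = (\<lambda>_. M)"
    unfolding mean_vec_def M_def block_mean_def sum_eq[symmetric] sum_V_split[of w] using np
    by (simp add: field_simps)
  have dev: "block_mean L w - M = D / 2" "block_mean R w - M = - (D / 2)"
    unfolding M_def D_def mean_gap_def by (simp_all add: field_simps)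
  have "\<bar>block_mean L w - M\<bar> = \<bar>D\<bar> / 2" "\<bar>block_mean R w - M\<bar> = \<bar>D\<bar> / 2"
    unfolding dev by simp_all
  then have "l1norm V (\<lambda>k. w k - mean_vec V v0 k) \<le> within_var w / (2 * s) + real n * s + real n * \<bar>D\<bar>"
    unfolding l1norm_def sum_V_split mean within_var_def
    using sum_abs_dev_le[of L s w M] sum_abs_dev_le[of R s w M] s by (simp add: field_simps)
  also have "real n * \<bar>D\<bar> \<le> ((real n)\<^sup>2 * D\<^sup>2 / d + d) / 2"
    using abs_le_amgm[OF d, of "real n * D"] by (simp add: abs_mult power_mult_distrib)
  finally have "l1norm V (\<lambda>k. w k - mean_vec V v0 k)
      \<le> within_var w / (2 * s) + real n * s + ((real n)\<^sup>2 * D\<^sup>2 / d + d) / 2"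
    by simp
  also have "\<dots> = (real n * within_var w + (real n)\<^sup>2 * D\<^sup>2) / (2 * d) + 3 * d / 2"
    unfolding s_def using np d by (simp add: field_simps)
  finally show ?thesis unfolding D_def .
qed

lemma initial_bounds:
  assumes "l1norm V v0 = 1"
  shows "within_var v0 \<le> 1" "potential v0 \<le> 11"
proof -
  have one: "(\<Sum>k\<in>V. \<bar>v0 k\<bar>) = 1" using assms unfolding l1norm_def .
  have "(\<Sum>k\<in>V. (v0 k)\<^sup>2) \<le> (\<Sum>k\<in>V. \<bar>v0 k\<bar>)"
  proof (rule sum_mono)
    fix k assume "k \<in> V"
    then have "\<bar>v0 k\<bar> \<le> 1" using one member_le_sum[of k V "\<lambda>k. \<bar>v0 k\<bar>"] by simp
    then have "\<bar>v0 k\<bar> * \<bar>v0 k\<bar> \<le> \<bar>v0 k\<bar> * 1" by (intro mult_left_mono) auto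
    then show "(v0 k)\<^sup>2 \<le> \<bar>v0 k\<bar>" by (simp add: power2_eq_square)
  qed
  moreover have "within_var v0 \<le> (\<Sum>k\<in>L. (v0 k)\<^sup>2) + (\<Sum>k\<in>R. (v0 k)\<^sup>2)"
    unfolding within_var_def by (simp add: variance_sum_eq add_mono)
  ultimately show F: "within_var v0 \<le> 1" using one sum_V_split[of "\<lambda>k. (v0 k)\<^sup>2"] by simp
  have "\<bar>(\<Sum>k\<in>L. v0 k) - (\<Sum>k\<in>R. v0 k)\<bar> \<le> \<bar>\<Sum>k\<in>L. v0 k\<bar> + \<bar>\<Sum>k\<in>R. v0 k\<bar>"
    by (rule abs_triangle_ineq4)
  also have "\<dots> \<le> (\<Sum>k\<in>L. \<bar>v0 k\<bar>) + (\<Sum>k\<in>R. \<bar>v0 k\<bar>)" by (intro add_mono sum_abs)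
  also have "\<dots> = 1" using one sum_V_split[of "\<lambda>k. \<bar>v0 k\<bar>"] by simp
  finally have "\<bar>(\<Sum>k\<in>L. v0 k) - (\<Sum>k\<in>R. v0 k)\<bar>\<^sup>2 \<le> 1" by (intro power_le_one) auto
  moreover have "(real n)\<^sup>2 * (mean_gap v0)\<^sup>2 = \<bar>(\<Sum>k\<in>L. v0 k) - (\<Sum>k\<in>R. v0 k)\<bar>\<^sup>2"
    unfolding mean_gap_def block_mean_def using n_pos by (simp add: power_divide field_simps)
  moreover have "potential_weight * within_var v0 \<le> 10 * 1"
    using F within_var_nonneg[of v0] by (intro mult_mono) (auto simp: potential_weight_def)
  ultimately show "potential v0 \<le> 11" unfolding potential_def by simp
qed

lemma expected_l1_dist_le:
  assumes "d > 0"
  shows "expected_l1_dist V E t v0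
           \<le> (real n * expected_after E t v0 within_var
               + expected_after E t v0 (\<lambda>w. (real n)\<^sup>2 * (mean_gap w)\<^sup>2)) / (2 * d) + 3 * d / 2"
proof -
  have "expected_l1_dist V E t v0
      \<le> expected_after E t v0 (\<lambda>w. 1 / (2 * d) * (real n * within_var w + 1 * ((real n)\<^sup>2 * (mean_gap w)\<^sup>2))
                                 + 3 * d / 2 * 1)"
    unfolding expected_l1_dist_eq_expected_after
    by (rule expected_after_mono) (use l1_dist_bound[OF sum_run_avg_V assms] in \<open>auto simp: edge_seqs_def\<close>)
  also have "\<dots> = (real n * expected_after E t v0 within_var
               + expected_after E t v0 (\<lambda>w. (real n)\<^sup>2 * (mean_gap w)\<^sup>2)) / (2 * d) + 3 * d / 2"
    unfolding expected_after_linear expected_after_const[OF finite_E card_E_pos] by simp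
  finally show ?thesis .
qed

lemma slow_rate_power:
  assumes "1 \<le> K"
  shows "slow_rate ^ (18 * K * n ^ 3) \<le> 1 / real K"
proof -
  have "slow_rate ^ (18 * K * n ^ 3) \<le> 1 / (1 + 1 / (6 * real n ^ 3) * real (18 * K * n ^ 3))"
    using slow_rate_bounds by (intro power_le_inverse_linear) auto
  also have "\<dots> = 1 / (1 + 3 * real K)" using n_pos by simp
  also have "\<dots> \<le> 1 / real K" using assms by (intro divide_left_mono) auto
  finally show ?thesis .
qed

lemma fast_rate_power:
  assumes "1 \<le> K"
  shows "real n * fast_rate ^ (18 * K * n ^ 3) \<le> 1 / real K"
proof -
  have "fast_rate ^ (18 * K * n ^ 3) \<le> 1 / (1 + 1 / (2 * real n) * real (18 * K * n ^ 3))"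
    using fast_rate_bounds n_pos by (intro power_le_inverse_linear) auto
  also have "\<dots> = 1 / (1 + 9 * real K * (real n)\<^sup>2)"
    using n_pos by (simp add: power2_eq_square power3_eq_cube)
  finally have "real n * fast_rate ^ (18 * K * n ^ 3) \<le> real n / (1 + 9 * real K * (real n)\<^sup>2)"
    using n_pos by (simp add: mult_left_mono divide_inverse)
  also have "\<dots> \<le> 1 / real K"
  proof -
    have "real n \<le> (real n)\<^sup>2" using n_pos by (simp add: power2_eq_square)
    then have "real n * real K \<le> real K * (real n)\<^sup>2"
      using mult_right_mono[of "real n" "(real n)\<^sup>2" "real K"] by (simp add: mult.commute)
    moreover have "0 \<le> real K * (real n)\<^sup>2" by simp
    ultimately have "real n * real K \<le> 1 + 9 * real K * (real n)\<^sup>2" by linarith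
    then show ?thesis using assms by (simp add: field_simps add_pos_nonneg)
  qed
  finally show ?thesis .
qed

lemma mixes_after_cubic_time:
  fixes K :: nat
  assumes "0 < \<epsilon>" "1 \<le> K" "108 \<le> real K * \<epsilon>\<^sup>2"
  shows "mixes \<epsilon> V E (18 * K * n ^ 3)"
  unfolding mixes_def
proof (intro allI impI)
  fix v0 assume v0: "l1norm V v0 = 1"
  define T d where "T = 18 * K * n ^ 3" and "d = \<epsilon> / 3"
  have d: "d > 0" unfolding d_def using assms by simp
  have "fast_rate ^ T * within_var v0 \<le> fast_rate ^ T"
    using initial_bounds(1)[OF v0] fast_rate_bounds(1) by (simp add: mult_left_le)
  then have "expected_after E T v0 within_var \<le> fast_rate ^ T + 22 / real n ^ 3 * slow_rate ^ T"
    using within_var_decay[OF initial_bounds(2)[OF v0], of T] by linarith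
  then have "real n * expected_after E T v0 within_var
      \<le> real n * fast_rate ^ T + 22 / (real n)\<^sup>2 * slow_rate ^ T"
    using n_pos mult_left_mono[of _ _ "real n"] by (fastforce simp: distrib_left power2_eq_square power3_eq_cube)
  also have "\<dots> \<le> 1 / real K + 22 * (1 / real K)"
  proof (intro add_mono)
    show "real n * fast_rate ^ T \<le> 1 / real K" unfolding T_def by (rule fast_rate_power[OF assms(2)])
    have "22 / (real n)\<^sup>2 \<le> 22" using n_pos by (simp add: field_simps one_le_power)
    then show "22 / (real n)\<^sup>2 * slow_rate ^ T \<le> 22 * (1 / real K)"
      using slow_rate_power[OF assms(2)] slow_rate_bounds(1) unfolding T_def
      by (intro mult_mono) auto
  qed
  finally have F: "real n * expected_after E T v0 within_var \<le> 23 / real K" by simp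
  have D: "expected_after E T v0 (\<lambda>w. (real n)\<^sup>2 * (mean_gap w)\<^sup>2) \<le> 11 / real K"
    using mean_gap_sq_decay[OF initial_bounds(2)[OF v0], of T] slow_rate_power[OF assms(2)]
    unfolding T_def by simp
  have "expected_l1_dist V E T v0 \<le> (23 / real K + 11 / real K) / (2 * d) + 3 * d / 2"
    using expected_l1_dist_le[OF d, of T v0] divide_right_mono[OF add_mono[OF F D], of "2 * d"] d
    by simp
  also have "\<dots> \<le> 3 * d"
  proof -
    have "3 * real K * d\<^sup>2 = real K * \<epsilon>\<^sup>2 / 3" unfolding d_def by (simp add: power2_eq_square)
    then have "34 \<le> 3 * real K * d\<^sup>2" using assms(3) by linarith
    then show ?thesis using assms(2) d by (simp add: field_simps power2_eq_square)
  qed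
  finally show "expected_l1_dist V E T v0 \<le> \<epsilon>" unfolding d_def by simp
qed

subsection \<open>Lower bound\<close>

text \<open>\<open>defect\<close> is the small root of \<open>\<lambda>\<^sup>2 - (n + 2) \<lambda> + 2 = 0\<close>, the equation that makes \<open>slow_mode\<close>
  an eigenvector of the expected averaging step.\<close>

definition defect :: real where
  "defect = (real n + 2 - sqrt ((real n + 2)\<^sup>2 - 8)) / 2"

lemma defect_root: "defect\<^sup>2 - (real n + 2) * defect + 2 = 0"
  and defect_bounds: "0 \<le> defect" "defect \<le> 1" "defect * (real n + 1) \<le> 2"
proof -
  define S where "S = sqrt ((real n + 2)\<^sup>2 - 8)"
  have lower: "(real n)\<^sup>2 \<le> (real n + 2)\<^sup>2 - 8" using n_pos by (simp add: power2_eq_square algebra_simps)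
  then have "0 \<le> (real n + 2)\<^sup>2 - 8" by (meson order_trans zero_le_power2)
  then have S: "S\<^sup>2 = (real n + 2)\<^sup>2 - 8" "real n \<le> S" "S \<le> real n + 2"
    unfolding S_def using lower real_sqrt_le_mono[of "(real n + 2)\<^sup>2 - 8" "(real n + 2)\<^sup>2"]
    by (auto intro: real_le_rsqrt)
  show root: "defect\<^sup>2 - (real n + 2) * defect + 2 = 0"
    unfolding defect_def S_def[symmetric] using S(1) by (simp add: power2_eq_square field_simps)
  show "0 \<le> defect" "defect \<le> 1" unfolding defect_def S_def[symmetric] using S by auto
  then have "defect * (real n + 1) \<le> defect * (real n + 2 - defect)" by (intro mult_left_mono) auto
  also have "\<dots> = 2" using root by (simp add: power2_eq_square algebra_simps)
  finally show "defect * (real n + 1) \<le> 2" .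
qed

definition slow_mode :: "nat \<Rightarrow> real" where
  "slow_mode k = (if k \<in> L then 1 - (if k = n then defect else 0)
                  else if k \<in> R then -1 + (if k = 2*n then defect else 0) else 0)"

definition slow_coord :: "(nat \<Rightarrow> real) \<Rightarrow> real" where
  "slow_coord w = (\<Sum>k\<in>V. slow_mode k * w k)"

lemma sum_slow_mode_L: "(\<Sum>k\<in>L. slow_mode k * f k) = (\<Sum>k\<in>L. f k) - defect * f n"
proof -
  have "(\<Sum>k\<in>L. slow_mode k * f k) = (\<Sum>k\<in>L. f k - (if k = n then defect * f k else 0))"
    by (intro sum.cong) (auto simp: slow_mode_def algebra_simps)
  then show ?thesis using n_pos by (simp add: sum_subtractf)
qed

lemma sum_slow_mode_R: "(\<Sum>k\<in>R. slow_mode k * f k) = - (\<Sum>k\<in>R. f k) + defect * f (2*n)"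
proof -
  have "(\<Sum>k\<in>R. slow_mode k * f k) = (\<Sum>k\<in>R. (if k = 2*n then defect * f k else 0) - f k)"
    by (intro sum.cong) (auto simp: slow_mode_def algebra_simps)
  then show ?thesis using n_pos by (simp add: sum_subtractf)
qed

lemma slow_coord_eq: "slow_coord w = (\<Sum>k\<in>L. w k) - defect * w n - (\<Sum>k\<in>R. w k) + defect * w (2*n)"
  unfolding slow_coord_def sum_V_split sum_slow_mode_L sum_slow_mode_R by simp

lemma slow_coord_step:
  "(\<Sum>e\<in>E. slow_coord (avg_step e w)) = (real (card E) - defect / 2) * slow_coord w"
proof -
  have sub: "L \<subseteq> V" "R \<subseteq> V" by auto
  have left: "(\<Sum>e\<in>clique_edges L. slow_coord (avg_step e w) - slow_coord w)
      = - (real n * ((\<Sum>k\<in>L. w k) - defect * w n) - (real n - defect) * (\<Sum>k\<in>L. w k)) / 2"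
    unfolding slow_coord_def sum_clique_linear_change[OF finite_atLeastAtMost sub(1)]
    using sum_slow_mode_L[of w] sum_slow_mode_L[of "\<lambda>_. 1"] by auto
  have right: "(\<Sum>e\<in>clique_edges R. slow_coord (avg_step e w) - slow_coord w)
      = - (real n * (- (\<Sum>k\<in>R. w k) + defect * w (2*n)) - (defect - real n) * (\<Sum>k\<in>R. w k)) / 2"
    unfolding slow_coord_def sum_clique_linear_change[OF finite_atLeastAtMost sub(2)]
    using sum_slow_mode_R[of w] sum_slow_mode_R[of "\<lambda>_. 1"] by auto
  have ends: "slow_mode n = 1 - defect" "slow_mode (2*n) = defect - 1"
    unfolding slow_mode_def using n_pos by auto
  have "slow_coord (avg_step {n, 2*n} w) - slow_coord w
      = - (slow_mode n - slow_mode (2*n)) * (w n - w (2*n)) / 2"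
    unfolding slow_coord_def using n_pos by (intro sum_linear_avg_step) auto
  also have "\<dots> = - (1 - defect) * (w n - w (2*n))"
    unfolding ends by (simp add: field_simps)
  finally have bridge: "slow_coord (avg_step {n, 2*n} w) - slow_coord w = - (1 - defect) * (w n - w (2*n))" .
  have "(\<Sum>e\<in>E. slow_coord (avg_step e w))
      = (real (card E) - defect / 2) * slow_coord w
        - (w n - w (2*n)) * (defect\<^sup>2 - (real n + 2) * defect + 2) / 2"
    unfolding sum_E_avg_step left right bridge unfolding slow_coord_eq
    by (simp add: power2_eq_square field_simps)
  then show ?thesis unfolding defect_root by simp
qed

lemma slow_mode_signs: "k \<in> L \<Longrightarrow> 0 \<le> slow_mode k" "k \<in> R \<Longrightarrow> slow_mode k \<le> 0"
  and abs_slow_mode_le: "\<bar>slow_mode k\<bar> \<le> 1"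
  using defect_bounds by (auto simp: slow_mode_def)

lemma slow_mode_sums:
  "(\<Sum>k\<in>V. slow_mode k) = 0"
  "(\<Sum>k\<in>V. \<bar>slow_mode k\<bar>) = 2 * (real n - defect)"
  "(\<Sum>k\<in>V. slow_mode k * slow_mode k) = 2 * (real n - defect - defect * (1 - defect))"
proof -
  have ends: "slow_mode n = 1 - defect" "slow_mode (2*n) = defect - 1"
    unfolding slow_mode_def using n_pos by auto
  show "(\<Sum>k\<in>V. slow_mode k) = 0"
    using sum_slow_mode_L[of "\<lambda>_. 1"] sum_slow_mode_R[of "\<lambda>_. 1"] unfolding sum_V_split by simp
  have "(\<Sum>k\<in>L. \<bar>slow_mode k\<bar>) = (\<Sum>k\<in>L. slow_mode k)" "(\<Sum>k\<in>R. \<bar>slow_mode k\<bar>) = (\<Sum>k\<in>R. - slow_mode k)"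
    using slow_mode_signs by (auto intro!: sum.cong)
  then show "(\<Sum>k\<in>V. \<bar>slow_mode k\<bar>) = 2 * (real n - defect)"
    using sum_slow_mode_L[of "\<lambda>_. 1"] sum_slow_mode_R[of "\<lambda>_. 1"]
    unfolding sum_V_split by (simp add: sum_negf)
  have "(\<Sum>k\<in>L. slow_mode k * slow_mode k) = real n - defect - defect * (1 - defect)"
    using sum_slow_mode_L[of slow_mode] sum_slow_mode_L[of "\<lambda>_. 1"] ends(1) by simp
  moreover have "(\<Sum>k\<in>R. slow_mode k * slow_mode k) = real n - defect - defect * (1 - defect)"
    using sum_slow_mode_R[of slow_mode, unfolded ends(2)] sum_slow_mode_R[of "\<lambda>_. 1"]
    by (simp add: algebra_simps)
  ultimately show "(\<Sum>k\<in>V. slow_mode k * slow_mode k) = 2 * (real n - defect - defect * (1 - defect))"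
    unfolding sum_V_split by simp
qed

lemma slow_coord_le_l1norm: "slow_coord w \<le> l1norm V w"
  unfolding slow_coord_def l1norm_def
proof (rule sum_mono)
  fix k
  have "slow_mode k * w k \<le> \<bar>slow_mode k\<bar> * \<bar>w k\<bar>" by (simp add: abs_mult[symmetric])
  also have "\<dots> \<le> \<bar>w k\<bar>" using abs_slow_mode_le[of k] by (simp add: mult_left_le_one_le)
  finally show "slow_mode k * w k \<le> \<bar>w k\<bar>" .
qed

definition slow_init :: "nat \<Rightarrow> real" where
  "slow_init k = slow_mode k / (2 * (real n - defect))"

lemma slow_init:
  assumes "2 \<le> n"
  shows "l1norm V slow_init = 1" "mean_vec V slow_init = (\<lambda>_. 0)" "1 - defect \<le> slow_coord slow_init"
proof -
  have pos: "0 < real n - defect" using assms defect_bounds(2) by simp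
  show "l1norm V slow_init = 1" "mean_vec V slow_init = (\<lambda>_. 0)"
    using slow_mode_sums(1,2) pos
    by (simp_all add: l1norm_def mean_vec_def slow_init_def sum_divide_distrib[symmetric])
  have "slow_coord slow_init = (\<Sum>k\<in>V. slow_mode k * slow_mode k) / (2 * (real n - defect))"
    unfolding slow_coord_def slow_init_def by (simp add: sum_divide_distrib)
  also have "\<dots> = (real n - defect - defect * (1 - defect)) / (real n - defect)"
    unfolding slow_mode_sums(3) by (rule mult_divide_mult_cancel_left) simp
  finally have coord: "slow_coord slow_init = (real n - defect - defect * (1 - defect)) / (real n - defect)" .
  have "defect * 1 \<le> defect * real n" using defect_bounds(1) assms by (intro mult_left_mono) auto
  then have "(1 - defect) * (real n - defect) \<le> real n - defect - defect * (1 - defect)"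
    by (simp add: algebra_simps)
  then show "1 - defect \<le> slow_coord slow_init" unfolding coord using pos by (simp add: le_divide_eq)
qed

definition slow_eigenvalue :: real where
  "slow_eigenvalue = 1 - defect / (2 * real (card E))"

lemma expected_slow_coord: "expected_after E t v0 slow_coord = slow_eigenvalue ^ t * slow_coord v0"
  using expected_after_eigen[OF finite_E card_E_pos slow_coord_step, of t v0] card_E_pos
  by (simp add: slow_eigenvalue_def field_simps)

lemma slow_eigenvalue_power: "1 - real t / real n ^ 3 \<le> slow_eigenvalue ^ t"
proof -
  have "(real n + 1) * real (card E) = real n ^ 3 + 1"
    unfolding card_E by (simp add: power3_eq_cube algebra_simps)
  then have "defect * real n ^ 3 \<le> defect * ((real n + 1) * real (card E))"
    using defect_bounds(1) by (intro mult_left_mono) auto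
  also have "\<dots> \<le> 2 * real (card E)"
    using defect_bounds(3) by (simp add: mult.assoc[symmetric] mult_right_mono)
  finally have rate: "defect / (2 * real (card E)) \<le> 1 / real n ^ 3"
    using card_E_pos n_pos by (simp add: field_simps)
  have "1 - real t / real n ^ 3 \<le> 1 - real t * (defect / (2 * real (card E)))"
    using mult_left_mono[OF rate, of "real t"] by simp
  also have "\<dots> \<le> slow_eigenvalue ^ t"
  proof -
    have "1 / real n ^ 3 \<le> 1" using n_pos by simp
    then show ?thesis unfolding slow_eigenvalue_def
      using Bernoulli_inequality[of "- (defect / (2 * real (card E)))" t] rate by simp
  qed
  finally show ?thesis .
qed

lemma not_mixes_before_cubic_time:
  assumes "0 < \<epsilon>" "\<epsilon> < 1" and large: "2 / (real n + 1) \<le> (1 - \<epsilon>) / 3"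
    and early: "real t \<le> (1 - \<epsilon>) / 3 * real n ^ 3"
  shows "\<not> mixes \<epsilon> V E t"
proof -
  define \<eta> where "\<eta> = 1 - \<epsilon>"
  have \<eta>: "0 < \<eta>" "\<eta> < 1" unfolding \<eta>_def using assms by auto
  have "2 \<le> n"
  proof (rule ccontr)
    assume "\<not> 2 \<le> n"
    then have "n = 1" using n_pos by simp
    then show False using large \<eta> unfolding \<eta>_def by simp
  qed
  have "defect \<le> 2 / (real n + 1)"
    using defect_bounds(3) by (simp add: le_divide_eq add_pos_nonneg)
  then have defect_small: "defect \<le> \<eta> / 3" using large unfolding \<eta>_def by linarith
  have "real t / real n ^ 3 \<le> \<eta> / 3" using early n_pos unfolding \<eta>_def by (simp add: field_simps)
  then have decay: "1 - \<eta> / 3 \<le> slow_eigenvalue ^ t" using slow_eigenvalue_power[of t] by linarith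
  have "(1 - \<eta> / 3) * (1 - \<eta> / 3) = \<epsilon> + (\<eta> / 3 + \<eta> * \<eta> / 9)"
    unfolding \<eta>_def by (simp add: field_simps)
  moreover have "0 < \<eta> / 3 + \<eta> * \<eta> / 9" using \<eta> by (simp add: add_pos_nonneg)
  ultimately have "\<epsilon> < (1 - \<eta> / 3) * (1 - \<eta> / 3)" by linarith
  also have "\<dots> \<le> slow_eigenvalue ^ t * slow_coord slow_init"
    using decay slow_init(3)[OF \<open>2 \<le> n\<close>] defect_small \<eta> by (intro mult_mono) auto
  also have "\<dots> = expected_after E t slow_init slow_coord" by (rule expected_slow_coord[symmetric])
  also have "\<dots> \<le> expected_l1_dist V E t slow_init"
    unfolding expected_l1_dist_eq_expected_after slow_init(2)[OF \<open>2 \<le> n\<close>]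
    by (intro expected_after_mono) (use slow_coord_le_l1norm in simp)
  finally show ?thesis using slow_init(1)[OF \<open>2 \<le> n\<close>] unfolding mixes_def by force
qed

lemma t_eps_1_dumbbell_bounds:
  fixes K :: nat
  assumes "0 < \<epsilon>" "\<epsilon> < 1" "1 \<le> K" "108 \<le> real K * \<epsilon>\<^sup>2"
  shows "((1 - \<epsilon>) / 6) ^ 3 * real n ^ 3 \<le> real (t_eps_1 \<epsilon> V E)"
    and "t_eps_1 \<epsilon> V E \<le> 18 * K * n ^ 3"
proof -
  define T where "T = t_eps_1 \<epsilon> V E"
  have "mixes \<epsilon> V E (18 * K * n ^ 3)" by (rule mixes_after_cubic_time[OF assms(1,3,4)])
  then show "t_eps_1 \<epsilon> V E \<le> 18 * K * n ^ 3" by (rule t_eps_1_le)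
  from \<open>mixes \<epsilon> V E (18 * K * n ^ 3)\<close> have T: "mixes \<epsilon> V E T"
    unfolding T_def by (rule mixes_t_eps_1)
  have "1 \<le> T" using T not_mixes_at_0[of V 1 "2*n" \<epsilon> E] n_pos assms(2) by (cases T) auto
  show "((1 - \<epsilon>) / 6) ^ 3 * real n ^ 3 \<le> real T"
  proof (cases "2 / (real n + 1) \<le> (1 - \<epsilon>) / 3")
    case True
    then have "(1 - \<epsilon>) / 3 * real n ^ 3 < real T"
      using not_mixes_before_cubic_time[OF assms(1,2) True] T by force
    moreover have "((1 - \<epsilon>) / 6) ^ 3 \<le> (1 - \<epsilon>) / 3"
    proof -
      have "(1 - \<epsilon>) ^ 3 \<le> (1 - \<epsilon>) ^ 1" using assms by (intro power_decreasing) auto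
      then show ?thesis using assms by (simp add: power_divide)
    qed
    then have "((1 - \<epsilon>) / 6) ^ 3 * real n ^ 3 \<le> (1 - \<epsilon>) / 3 * real n ^ 3"
      by (intro mult_right_mono) auto
    ultimately show ?thesis by linarith
  next
    case False
    then have "(1 - \<epsilon>) * (real n + 1) < 6" by (simp add: field_simps)
    then have "(1 - \<epsilon>) / 6 * real n \<le> 1" using assms by (simp add: field_simps)
    have "((1 - \<epsilon>) / 6) ^ 3 * real n ^ 3 = ((1 - \<epsilon>) / 6 * real n) ^ 3"
      by (rule power_mult_distrib[symmetric])
    also have "\<dots> \<le> 1" using \<open>(1 - \<epsilon>) / 6 * real n \<le> 1\<close> assms by (intro power_le_one) auto
    also have "\<dots> \<le> real T" using \<open>1 \<le> T\<close> by simp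
    finally show ?thesis .
  qed
qed

end

theorem theorem6:
  fixes \<epsilon> :: real
  assumes "0 < \<epsilon>" and "\<epsilon> < 1"
  shows "\<exists>c C. 0 < c \<and> c \<le> C \<and>
           (\<forall>n::nat. n \<ge> 1 \<longrightarrow>
              c * real n ^ 3 \<le> real (t_eps_1 \<epsilon> (dumbbell_V n) (dumbbell_E n)) \<and>
              real (t_eps_1 \<epsilon> (dumbbell_V n) (dumbbell_E n)) \<le> C * real n ^ 3)"
proof -
  define K :: nat where "K = nat \<lceil>108 / \<epsilon>\<^sup>2\<rceil>"
  have K_ge: "108 / \<epsilon>\<^sup>2 \<le> real K" unfolding K_def by linarith
  moreover have "0 < 108 / \<epsilon>\<^sup>2" using assms by simp
  ultimately have "0 < real K" by linarith
  then have K: "1 \<le> K" "108 \<le> real K * \<epsilon>\<^sup>2"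
    using K_ge assms by (simp_all add: divide_le_eq)
  have bounds: "((1 - \<epsilon>) / 6) ^ 3 * real n ^ 3 \<le> real (t_eps_1 \<epsilon> (dumbbell_V n) (dumbbell_E n))
      \<and> real (t_eps_1 \<epsilon> (dumbbell_V n) (dumbbell_E n)) \<le> 18 * real K * real n ^ 3" if "1 \<le> n" for n
  proof -
    interpret dumbbell n using that by unfold_locales
    show ?thesis
      using t_eps_1_dumbbell_bounds[OF assms K] of_nat_mono unfolding dumbbell_V_def by fastforce
  qed
  have "((1 - \<epsilon>) / 6) ^ 3 \<le> 1" using assms by (intro power_le_one) auto
  then have "0 < ((1 - \<epsilon>) / 6) ^ 3" "((1 - \<epsilon>) / 6) ^ 3 \<le> 18 * real K"
    using assms K by auto
  with bounds show ?thesis by blast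
qed

end
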